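(* Let $B \subset \mathbb{R}^3$ be a bounded convex set and let $\hat{P} \in \mathbb{R}^3$ with $\hat{P} \notin \mathrm{cl}(B)$. Then for every $\hat{P}' \in \mathbb{R}^3 \setminus B$: $\hat{P}' \in C^+(B,\hat{P})$ if and only if $\hat{P} \in C^-(B,\hat{P}')$.
   Context: For a bounded convex set $B \subset \mathbb{R}^3$ and a point $Q \in \mathbb{R}^3$ with $Q \notin B$: the positive half-cone $C^+(B,Q)$ is the set of points $Y \in \mathbb{R}^3$ for which there exist $x' \in B$ and $\alpha > 0$ such that $Y - Q = \alpha (Q - x')$. The negative half-cone $C^-(B,Q)$ is the set of points $Y \in \mathbb{R}^3 \setminus \mathrm{cl}(B)$ for which there exist $x' \in B$ and $0 < \alpha < 1$ such that $Y - Q = -\alpha (Q - x')$. Here $\mathrm{cl}(S)$ denotes the topological closure of $S$. *)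

theory Defs
  imports "HOL-Analysis.Analysis"
begin

definition pos_half_cone :: "(real^3) set \<Rightarrow> real^3 \<Rightarrow> (real^3) set" where
  "pos_half_cone B Q = {Y. \<exists>x'\<in>B. \<exists>\<alpha>::real. \<alpha> > 0 \<and> Y - Q = \<alpha> *\<^sub>R (Q - x')}"

definition neg_half_cone :: "(real^3) set \<Rightarrow> real^3 \<Rightarrow> (real^3) set" where
  "neg_half_cone B Q = {Y. Y \<notin> closure B \<and>
     (\<exists>x'\<in>B. \<exists>\<alpha>::real. 0 < \<alpha> \<and> \<alpha> < 1 \<and> Y - Q = - (\<alpha> *\<^sub>R (Q - x')))}"

end

theory Submission
  imports Defs
begin

text \<open>Both cones describe the same configuration: \<open>P'\<close> lies on the ray from some \<open>x' \<in> B\<close>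
  through \<open>P\<close>, strictly beyond \<open>P\<close>; the two parameters are related by \<open>\<beta> = \<alpha> / (1 + \<alpha>)\<close>.\<close>

lemma beyond_on_ray_iff_strictly_between:
  fixes x p q :: "'a::real_vector"
  shows "(\<exists>\<alpha>>0. q - p = \<alpha> *\<^sub>R (p - x)) \<longleftrightarrow>
         (\<exists>\<beta>. 0 < \<beta> \<and> \<beta> < 1 \<and> p - q = - (\<beta> *\<^sub>R (q - x)))"
proof
  assume "\<exists>\<alpha>>0. q - p = \<alpha> *\<^sub>R (p - x)"
  then obtain \<alpha> where \<alpha>: "\<alpha> > 0" "q - p = \<alpha> *\<^sub>R (p - x)" by blast
  define \<beta> where "\<beta> = \<alpha> / (1 + \<alpha>)"
  have "q - x = (1 + \<alpha>) *\<^sub>R (p - x)"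
    using \<alpha>(2) by (simp add: algebra_simps)
  then have "\<beta> *\<^sub>R (q - x) = q - p"
    using \<alpha> by (simp add: \<beta>_def)
  moreover have "0 < \<beta>" "\<beta> < 1"
    using \<alpha>(1) by (simp_all add: \<beta>_def)
  ultimately show "\<exists>\<beta>. 0 < \<beta> \<and> \<beta> < 1 \<and> p - q = - (\<beta> *\<^sub>R (q - x))"
    by (metis minus_diff_eq)
next
  assume "\<exists>\<beta>. 0 < \<beta> \<and> \<beta> < 1 \<and> p - q = - (\<beta> *\<^sub>R (q - x))"
  then obtain \<beta> where \<beta>: "0 < \<beta>" "\<beta> < 1" "p - q = - (\<beta> *\<^sub>R (q - x))"
    by blast
  define \<alpha> where "\<alpha> = \<beta> / (1 - \<beta>)"
  have "q - p = \<beta> *\<^sub>R (q - x)"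
    using \<beta>(3) by (metis minus_diff_eq minus_minus)
  moreover have "p - x = (1 - \<beta>) *\<^sub>R (q - x)"
    using \<beta>(3) by (simp add: algebra_simps)
  then have "\<alpha> *\<^sub>R (p - x) = \<beta> *\<^sub>R (q - x)"
    using \<beta> by (simp add: \<alpha>_def)
  moreover have "\<alpha> > 0"
    using \<beta> by (simp add: \<alpha>_def)
  ultimately show "\<exists>\<alpha>>0. q - p = \<alpha> *\<^sub>R (p - x)"
    by metis
qed

theorem proposition1:
  fixes B :: "(real^3) set" and P P' :: "real^3"
  assumes "bounded B" and "convex B"
    and "P \<notin> closure B"
    and "P' \<notin> B"
  shows "P' \<in> pos_half_cone B P \<longleftrightarrow> P \<in> neg_half_cone B P'"
  using assms(3) beyond_on_ray_iff_strictly_between[of P' P]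
  unfolding pos_half_cone_def neg_half_cone_def by blast

end
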